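(* Let $q$ be a power of an odd prime, write $q-1=2^s r$ with $r$ odd, let $c\in\mathbb{F}_q^*$, and $f(X)=c(X^{q+1}-X^2)$ on $\mathbb{F}_{q^2}$. Let $P$ be any periodic point of $f$ not lying in the connected component of $0$ in the functional graph of $f$. Then the subgraph consisting of $P$ together with all non-periodic $v\in\mathbb{F}_{q^2}$ such that $P$ is the first periodic element of the sequence $v,f(v),f^{(2)}(v),\dots$ (with the edges $x\to f(x)$ among these vertices) is a tree isomorphic to $\mathscr{T}(s)$ with root $P$.
   Context: The functional graph of $f$ is the directed graph on $\mathbb{F}_{q^2}$ with edges $x\to f(x)$; $\alpha$ is periodic if $f^{(n)}(\alpha)=\alpha$ for some $n\ge1$. $\mathscr{T}(1)$ is the tree with two vertices $P_1,P$ and the edge $P_1\to P$ (root $P$); for $m\ge1$, $\mathscr{T}(m+1)$ is obtained from $\mathscr{T}(m)$ by attaching two new vertices, each with an edge directed to it, to every vertex of the last (top) level of $\mathscr{T}(m)$. *)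

theory Defs
  imports "HOL-Computational_Algebra.Primes"
begin

definition periodic :: "('a \<Rightarrow> 'a) \<Rightarrow> 'a \<Rightarrow> bool" where
  "periodic f x \<longleftrightarrow> (\<exists>n\<ge>1. (f ^^ n) x = x)"

text \<open>x and y lie in the same connected component of the functional graph of f
  (for a functional graph this means that their forward orbits meet).\<close>
definition same_component :: "('a \<Rightarrow> 'a) \<Rightarrow> 'a \<Rightarrow> 'a \<Rightarrow> bool" where
  "same_component f x y \<longleftrightarrow> (\<exists>m n. (f ^^ m) x = (f ^^ n) y)"

definition first_periodic :: "('a \<Rightarrow> 'a) \<Rightarrow> 'a \<Rightarrow> 'a \<Rightarrow> bool" where
  "first_periodic f v P \<longleftrightarrow>
     (\<exists>n. (f ^^ n) v = P \<and> periodic f P \<and> (\<forall>k<n. \<not> periodic f ((f ^^ k) v)))"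

definition tree_at :: "('a \<Rightarrow> 'a) \<Rightarrow> 'a \<Rightarrow> 'a set" where
  "tree_at f P = insert P {v. \<not> periodic f v \<and> first_periodic f v P}"

text \<open>Vertices are words over bool; the root P is encoded by the empty word [],
  P_1 by [False]; a vertex w gets the two new vertices w @ [False], w @ [True]
  attached.  T(m) is given by (vertex set, edge relation, top level), defined
  recursively exactly as in the paper.\<close>
fun Tree :: "nat \<Rightarrow> bool list set \<times> (bool list \<times> bool list) set \<times> bool list set" where
  "Tree 0 = ({[]}, {}, {[]})"
| "Tree (Suc 0) = ({[], [False]}, {([False], [])}, {[False]})"
| "Tree (Suc (Suc m)) =
     (let (V, E, L) = Tree (Suc m);
          N = {w @ [b] | w b. w \<in> L}
      in (V \<union> N, E \<union> {(w @ [b], w) | w b. w \<in> L}, N))"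

definition T_verts :: "nat \<Rightarrow> bool list set" where
  "T_verts m = fst (Tree m)"

definition T_edges :: "nat \<Rightarrow> (bool list \<times> bool list) set" where
  "T_edges m = fst (snd (Tree m))"

text \<open>The subgraph on vertex set V (with edges x \<rightarrow> f x among these vertices) is a
  tree isomorphic to T(m) with root P.  The root P is periodic, so its outgoing edge
  (possibly a self-loop when f P = P) does not belong to the tree; only edges
  x \<rightarrow> f x with x \<noteq> P are counted.\<close>
definition iso_to_T :: "('a \<Rightarrow> 'a) \<Rightarrow> 'a set \<Rightarrow> 'a \<Rightarrow> nat \<Rightarrow> bool" where
  "iso_to_T f V P m \<longleftrightarrow>
     (\<exists>\<phi>. bij_betw \<phi> V (T_verts m) \<and> \<phi> P = [] \<and>
        (\<forall>u\<in>V. \<forall>v\<in>V. (u \<noteq> P \<and> f u = v) \<longleftrightarrow> (\<phi> u, \<phi> v) \<in> T_edges m))"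

end

theory Submission
  imports Defs "HOL-Computational_Algebra.Polynomial" "HOL-Number_Theory.Residues"
begin

(* Write F_q for {t. t^q = t}.  For t in F_q one has f (t x) = t^2 f x, and conversely
   f x = t f y with t in F_q nonzero and f y \<noteq> 0 forces x \<in> F_q y.  Pulling back along
   periodic preimages, every v with f^k v = P is t w with w periodic and t a 2^k-th root of unity
   in F_q.  As the 2-part of F_q^* has order 2^s, already t^(2^s) = 1, so f^s v = f^s w is
   periodic: the tree at P has depth at most s.  Below depth s the factor t is a square in
   F_q, so each vertex of depth 1, ..., s-1 has exactly the two children u and -u, while P
   has the single child -w for its periodic preimage w.  A rooted tree with these
   branching numbers is T(s). *)

section \<open>Periodic points and the tree hanging at a periodic point\<close>

lemma periodic_funpow: "periodic f x \<Longrightarrow> periodic f ((f ^^ m) x)"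
  unfolding periodic_def by (metis funpow_add comp_apply add.commute)

lemma periodic_has_periodic_preimage:
  assumes "periodic f x"
  shows "\<exists>y. periodic f y \<and> f y = x"
proof -
  obtain n where "n \<ge> 1" "(f ^^ n) x = x"
    using assms unfolding periodic_def by blast
  then have "f ((f ^^ (n - 1)) x) = x"
    by (metis Suc_diff_le diff_Suc_1 funpow.simps(2) comp_apply)
  then show ?thesis
    using periodic_funpow[OF assms] by blast
qed

text \<open>A periodic point is recovered from its image by running once around a common period.\<close>
lemma periodic_inj:
  assumes "periodic f x" "periodic f y" "f x = f y"
  shows "x = y"
proof -
  obtain a b where ab: "a \<ge> 1" "(f ^^ a) x = x" "b \<ge> 1" "(f ^^ b) y = y"
    using assms(1,2) unfolding periodic_def by blast
  have fix_mult: "(f ^^ (n * m)) z = z" if "(f ^^ n) z = z" for n m z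
    using that by (induction m) (simp_all add: funpow_add)
  have "(f ^^ (a * b)) x = x" "(f ^^ (b * a)) y = y"
    using ab by (simp_all add: fix_mult)
  moreover have "a * b = Suc (a * b - 1)"
    using ab by (simp add: Suc_le_eq)
  ultimately show ?thesis
    using assms(3) by (metis mult.commute funpow_Suc_right comp_apply)
qed


definition tree_level :: "('a \<Rightarrow> 'a) \<Rightarrow> 'a \<Rightarrow> nat \<Rightarrow> 'a set" where
  "tree_level f P n = {v. (f ^^ n) v = P \<and> (\<forall>j<n. \<not> periodic f ((f ^^ j) v))}"

definition children :: "('a \<Rightarrow> 'a) \<Rightarrow> 'a \<Rightarrow> 'a set" where
  "children f v = {u. f u = v \<and> \<not> periodic f u}"

lemma tree_level_0 [simp]: "tree_level f P 0 = {P}"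
  by (simp add: tree_level_def)

lemma tree_level_Suc: "u \<in> tree_level f P (Suc n) \<longleftrightarrow> f u \<in> tree_level f P n \<and> \<not> periodic f u"
  by (auto simp: tree_level_def All_less_Suc2 funpow_swap1)

lemma tree_level_empty_mono:
  assumes "tree_level f P n = {}" "n \<le> k"
  shows "tree_level f P k = {}"
  using assms(2) by (induction k rule: dec_induct) (use assms(1) in \<open>auto simp: tree_level_Suc\<close>)

lemma tree_level_unique:
  assumes "periodic f P" "v \<in> tree_level f P m" "v \<in> tree_level f P n"
  shows "m = n"
  using assms by (cases rule: linorder_cases[of m n]) (auto simp: tree_level_def)

lemma tree_at_eq_UN_tree_level:
  assumes "periodic f P"
  shows "tree_at f P = (\<Union>n. tree_level f P n)"
proof -
  have "first_periodic f v P \<longleftrightarrow> (\<exists>n. v \<in> tree_level f P n)" for v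
    using assms by (auto simp: first_periodic_def tree_level_def)
  moreover have "\<not> periodic f v" if "v \<in> tree_level f P n" "v \<noteq> P" for v n
    using that by (cases n) (auto simp: tree_level_Suc)
  moreover have "P \<in> tree_level f P 0"
    by simp
  ultimately show ?thesis
    unfolding tree_at_def by (auto simp del: tree_level_0)
qed


section \<open>The trees T(m)\<close>

definition T_level :: "nat \<Rightarrow> bool list set" where
  "T_level n = {w. length w = n \<and> (w \<noteq> [] \<longrightarrow> hd w = False)}"

lemma T_level_0 [simp]: "T_level 0 = {[]}"
  by (auto simp: T_level_def)

lemma T_level_Suc_0: "T_level (Suc 0) = {[False]}"
  by (auto simp: T_level_def length_Suc_conv)

lemma T_level_Suc:
  "w \<in> T_level (Suc n) \<longleftrightarrow> w \<noteq> [] \<and> butlast w \<in> T_level n \<and> (n = 0 \<longrightarrow> last w = False)"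
  by (cases w rule: rev_cases) (auto simp: T_level_def hd_append)

lemma T_level_Suc_Suc: "T_level (Suc (Suc n)) = {w @ [b] | w b. w \<in> T_level (Suc n)}"
proof (intro equalityI subsetI)
  fix w assume "w \<in> T_level (Suc (Suc n))"
  then show "w \<in> {w @ [b] | w b. w \<in> T_level (Suc n)}"
    by (cases w rule: rev_cases) (auto simp: T_level_Suc)
qed (auto simp: T_level_Suc)

lemma Tree_eq:
  "Tree m = ((\<Union>n\<le>m. T_level n), {(w, butlast w) | w. w \<in> (\<Union>n\<le>m. T_level n) \<and> w \<noteq> []}, T_level m)"
proof (induction m rule: Tree.induct)
  case 2
  then show ?case
    by (auto simp: atMost_Suc T_level_Suc_0)
next
  case (3 m)
  let ?V = "\<lambda>k. \<Union>n\<le>k. T_level n"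
  have new_edges: "{(w @ [b], w) | w b. w \<in> T_level (Suc m)} =
      {(w, butlast w) | w. w \<in> T_level (Suc (Suc m))}"
    by (auto simp: T_level_Suc_Suc)
  have verts: "?V (Suc m) \<union> T_level (Suc (Suc m)) = ?V (Suc (Suc m))"
    by (auto simp: le_Suc_eq)
  have cond: "w \<in> ?V (Suc (Suc m)) \<and> w \<noteq> [] \<longleftrightarrow>
      w \<in> ?V (Suc m) \<and> w \<noteq> [] \<or> w \<in> T_level (Suc (Suc m))" for w
    by (auto simp: le_Suc_eq T_level_def)
  have edges: "{(w, butlast w) | w. w \<in> ?V (Suc m) \<and> w \<noteq> []} \<union>
      {(w, butlast w) | w. w \<in> T_level (Suc (Suc m))} =
      {(w, butlast w) | w. w \<in> ?V (Suc (Suc m)) \<and> w \<noteq> []}"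
    unfolding cond setcompr_eq_image Collect_disj_eq image_Un ..
  show ?case
    unfolding Tree.simps(3) 3 Let_def prod.case T_level_Suc_Suc[symmetric] new_edges verts edges ..
qed simp

lemma T_verts_eq: "T_verts m = (\<Union>n\<le>m. T_level n)"
  by (simp add: T_verts_def Tree_eq)

lemma mem_T_edges: "(w, w') \<in> T_edges m \<longleftrightarrow> w \<in> T_verts m \<and> w \<noteq> [] \<and> w' = butlast w"
  by (auto simp: T_edges_def T_verts_eq Tree_eq)


lemma iso_to_T_intro:
  assumes bij: "bij_betw \<phi> V (T_verts m)" and root: "P \<in> V" "\<phi> P = []"
    and parent: "\<And>u. u \<in> V \<Longrightarrow> u \<noteq> P \<Longrightarrow> f u \<in> V \<and> \<phi> (f u) = butlast (\<phi> u)"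
  shows "iso_to_T f V P m"
proof -
  have inj: "inj_on \<phi> V" and image: "\<phi> ` V = T_verts m"
    using bij by (auto simp: bij_betw_def)
  have "u \<noteq> P \<and> f u = v \<longleftrightarrow> (\<phi> u, \<phi> v) \<in> T_edges m" if "u \<in> V" "v \<in> V" for u v
  proof
    assume uv: "u \<noteq> P \<and> f u = v"
    then have "\<phi> u \<noteq> []"
      using inj root that(1) by (metis inj_onD)
    then show "(\<phi> u, \<phi> v) \<in> T_edges m"
      using image parent[OF that(1)] uv that(1) by (auto simp: mem_T_edges)
  next
    assume "(\<phi> u, \<phi> v) \<in> T_edges m"
    then have "\<phi> u \<noteq> []" "\<phi> v = butlast (\<phi> u)"
      by (simp_all add: mem_T_edges)
    moreover from this have "u \<noteq> P"
      using root by auto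
    moreover note parent[OF \<open>u \<in> V\<close> \<open>u \<noteq> P\<close>]
    ultimately show "u \<noteq> P \<and> f u = v"
      using inj that(2) by (metis inj_onD)
  qed
  then show ?thesis
    using bij root unfolding iso_to_T_def by blast
qed

text \<open>The address of a vertex v at depth n of the tree records, from the root downwards,
  which of the two children was taken at each step; the single child of the root is
  recorded as False, matching the vertex [False] of T(m).\<close>
primrec tree_address :: "('a \<Rightarrow> 'a) \<Rightarrow> ('a \<Rightarrow> bool) \<Rightarrow> nat \<Rightarrow> 'a \<Rightarrow> bool list" where
  "tree_address f b 0 v = []"
| "tree_address f b (Suc n) v = tree_address f b n (f v) @ [n \<noteq> 0 \<and> b v]"

lemma tree_address_in_T_level: "tree_address f b n v \<in> T_level n"
  by (induction n arbitrary: v) (simp_all add: T_level_Suc)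

lemma length_tree_address [simp]: "length (tree_address f b n v) = n"
  by (induction n arbitrary: v) simp_all

lemma bij_betw_card_2_bool:
  assumes "card S = 2"
  shows "bij_betw (\<lambda>u. u \<noteq> (SOME x. x \<in> S)) S UNIV"
proof -
  obtain x y where S: "S = {x, y}" "x \<noteq> y"
    using assms by (auto simp: card_2_iff)
  define z where "z = (SOME x. x \<in> S)"
  have "z \<in> S"
    unfolding z_def using S(1) by (metis insertI1 someI)
  then have "inj_on (\<lambda>u. u \<noteq> z) S" "(\<lambda>u. u \<noteq> z) ` S = UNIV"
    using S by (auto simp: inj_on_def)
  then show ?thesis
    by (simp add: bij_betw_def z_def)
qed

context
  fixes f :: "'a \<Rightarrow> 'a" and P :: 'a and m :: nat and b :: "'a \<Rightarrow> bool"
  assumes root_child: "0 < m \<Longrightarrow> card (children f P) = 1"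
    and branch: "\<And>n v. 0 < n \<Longrightarrow> n < m \<Longrightarrow> v \<in> tree_level f P n \<Longrightarrow> bij_betw b (children f v) UNIV"
begin

lemma inj_on_tree_address: "n \<le> m \<Longrightarrow> inj_on (tree_address f b n) (tree_level f P n)"
proof (induction n)
  case (Suc n)
  show ?case
  proof (rule inj_onI)
    fix u u'
    assume u: "u \<in> tree_level f P (Suc n)" and u': "u' \<in> tree_level f P (Suc n)"
      and eq: "tree_address f b (Suc n) u = tree_address f b (Suc n) u'"
    then have "f u = f u'"
      using Suc by (auto simp: tree_level_Suc dest: inj_onD)
    then have children: "u \<in> children f (f u)" "u' \<in> children f (f u)" "f u \<in> tree_level f P n"
      using u u' by (simp_all add: tree_level_Suc children_def)
    show "u = u'"
    proof (cases "n = 0")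
      case True
      then have "card (children f (f u)) = 1"
        using children(3) root_child Suc.prems by simp
      then show ?thesis
        using children(1,2) by (auto simp: card_1_singleton_iff)
    next
      case False
      then have "b u = b u'"
        using eq by simp
      then show ?thesis
        using branch[OF _ _ children(3)] False Suc.prems children(1,2)
        by (auto simp: bij_betw_def dest: inj_onD)
    qed
  qed
qed simp

lemma tree_address_image: "n \<le> m \<Longrightarrow> tree_address f b n ` tree_level f P n = T_level n"
proof (induction n)
  case (Suc n)
  have "T_level (Suc n) \<subseteq> tree_address f b (Suc n) ` tree_level f P (Suc n)"
  proof
    fix w assume w: "w \<in> T_level (Suc n)"
    have "butlast w \<in> T_level n" and w_last: "n = 0 \<Longrightarrow> \<not> last w"
      using w by (simp_all add: T_level_Suc)
    then obtain v where v: "v \<in> tree_level f P n" "tree_address f b n v = butlast w"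
      using Suc by (metis Suc_leD imageE)
    obtain u where u: "u \<in> children f v" "(n \<noteq> 0 \<and> b u) = last w"
    proof (cases "n = 0")
      case True
      then have "card (children f v) = 1"
        using root_child Suc.prems v(1) by simp
      then obtain u where "u \<in> children f v"
        by (auto simp: card_1_singleton_iff)
      with True w_last that show ?thesis
        by simp
    next
      case False
      then have "last w \<in> b ` children f v"
        using branch[OF _ _ v(1)] Suc.prems by (simp add: bij_betw_def)
      with False that show ?thesis
        by auto
    qed
    then have "u \<in> tree_level f P (Suc n)"
      using v(1) by (simp add: tree_level_Suc children_def)
    moreover have "tree_address f b (Suc n) u = w"
      using u v w by (simp add: children_def T_level_Suc)
    ultimately show "w \<in> tree_address f b (Suc n) ` tree_level f P (Suc n)"
      by (rule rev_image_eqI[OF _ sym])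
  qed
  moreover have "tree_address f b (Suc n) ` tree_level f P (Suc n) \<subseteq> T_level (Suc n)"
    by (intro image_subsetI tree_address_in_T_level)
  ultimately show ?case
    by (rule subset_antisym[rotated])
qed simp

theorem iso_to_T_tree_at:
  assumes P: "periodic f P" and top: "tree_level f P (Suc m) = {}"
  shows "iso_to_T f (tree_at f P) P m"
proof -
  define depth where "depth v = (THE n. v \<in> tree_level f P n)" for v
  define \<phi> where "\<phi> v = tree_address f b (depth v) v" for v
  have "n \<le> m" if "v \<in> tree_level f P n" for v n
    using tree_level_empty_mono[OF top, of n] that by (cases "n \<le> m") auto
  then have tree: "tree_at f P = (\<Union>n\<le>m. tree_level f P n)"
    unfolding tree_at_eq_UN_tree_level[OF P] by blast
  have \<phi>_level: "\<phi> v = tree_address f b n v" if "v \<in> tree_level f P n" for v n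
  proof -
    have "depth v = n"
      unfolding depth_def using that by (blast intro: the_equality tree_level_unique[OF P])
    then show ?thesis
      by (simp add: \<phi>_def)
  qed
  have "inj_on \<phi> (tree_at f P)"
  proof (rule inj_onI)
    fix u v assume "u \<in> tree_at f P" "v \<in> tree_at f P" and eq: "\<phi> u = \<phi> v"
    then obtain i j where ij: "i \<le> m" "u \<in> tree_level f P i" "v \<in> tree_level f P j"
      unfolding tree by blast
    with eq have "tree_address f b i u = tree_address f b j v"
      by (simp add: \<phi>_level)
    moreover from this have "i = j"
      by (metis length_tree_address)
    ultimately show "u = v"
      using inj_on_tree_address[OF ij(1)] ij(2,3) by (auto dest: inj_onD)
  qed
  moreover have "\<phi> ` tree_at f P = T_verts m"
    unfolding tree T_verts_eq image_UN
  proof (rule SUP_cong)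
    fix n assume "n \<in> {..m}"
    then show "\<phi> ` tree_level f P n = T_level n"
      using tree_address_image[of n] by (simp add: \<phi>_level cong: image_cong)
  qed simp
  moreover have "f v \<in> tree_at f P \<and> \<phi> (f v) = butlast (\<phi> v)"
    if v: "v \<in> tree_at f P" "v \<noteq> P" for v
  proof -
    obtain k where k: "k \<le> m" "v \<in> tree_level f P k"
      using v(1) unfolding tree by blast
    moreover have "k \<noteq> 0"
      using k(2) v(2) by (cases k) auto
    ultimately obtain n where n: "Suc n \<le> m" "v \<in> tree_level f P (Suc n)"
      using not0_implies_Suc by blast
    then have "f v \<in> tree_level f P n"
      by (simp add: tree_level_Suc)
    with n show ?thesis
      unfolding tree by (intro conjI UN_I[of n]) (simp_all add: \<phi>_level)
  qed
  moreover have "P \<in> tree_at f P" "\<phi> P = []"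
    using \<phi>_level[of P 0] by (simp_all add: tree_at_def)
  ultimately show ?thesis
    by (intro iso_to_T_intro[of \<phi>]) (simp_all add: bij_betw_def)
qed

end

theorem iso_to_T_if_card_children:
  assumes "periodic f P"
    and "\<And>n v. n < m \<Longrightarrow> v \<in> tree_level f P n \<Longrightarrow> card (children f v) = (if n = 0 then 1 else 2)"
    and "tree_level f P (Suc m) = {}"
  shows "iso_to_T f (tree_at f P) P m"
proof -
  define b where "b u \<longleftrightarrow> u \<noteq> (SOME x. x \<in> children f (f u))" for u
  have branch: "bij_betw b (children f v) UNIV" if "0 < n" "n < m" "v \<in> tree_level f P n" for n v
  proof -
    have "bij_betw b (children f v) UNIV \<longleftrightarrow>
        bij_betw (\<lambda>u. u \<noteq> (SOME x. x \<in> children f v)) (children f v) UNIV"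
      by (rule bij_betw_cong) (simp add: b_def children_def)
    then show ?thesis
      using bij_betw_card_2_bool assms(2)[OF that(2,3)] that(1) by simp
  qed
  have "0 < m \<Longrightarrow> card (children f P) = 1"
    using assms(2)[of 0 P] by simp
  from iso_to_T_tree_at[OF this branch assms(1,3)] show ?thesis .
qed

section \<open>Roots of unity in finite fields\<close>

lemma card_power_eq_le:
  fixes b :: "'a::idom"
  assumes "0 < n"
  shows "card {x. x ^ n = b} \<le> n"
proof -
  let ?p = "Polynomial.monom 1 n + [:- b:]"
  have "degree ?p = n"
    using assms by (simp add: degree_add_eq_left degree_monom_eq)
  then have "?p \<noteq> 0"
    using assms by auto
  moreover have "{x. x ^ n = b} = {x. poly ?p x = 0}"
    by (simp add: poly_monom)
  ultimately show ?thesis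
    using card_poly_roots_bound \<open>degree ?p = n\<close> by metis
qed

lemma card_le_mult_card_image:
  assumes "finite A" "\<And>y. card {x \<in> A. g x = y} \<le> k"
  shows "card A \<le> k * card (g ` A)"
proof -
  have "card A = card (\<Union>y\<in>g ` A. {x \<in> A. g x = y})"
    by (rule arg_cong[of _ _ card]) blast
  also have "\<dots> \<le> (\<Sum>y\<in>g ` A. card {x \<in> A. g x = y})"
    by (rule card_UN_le) (use assms(1) in simp)
  also have "\<dots> \<le> (\<Sum>y\<in>g ` A. k)"
    by (rule sum_mono) (rule assms(2))
  finally show ?thesis
    by (simp add: mult.commute)
qed

lemma power_eq_1_coprime:
  fixes a :: "'a::comm_monoid_mult"
  assumes "a ^ m = 1" "a ^ n = 1" "coprime m n"
  shows "a = 1"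
proof (cases "m = 0")
  case True
  then show ?thesis
    using assms by simp
next
  case False
  then obtain x y where "m * x = n * y + 1"
    using bezout_nat[of m n] assms(3) by auto
  then have "a ^ (m * x) = a ^ (n * y) * a"
    by (simp add: power_add mult.commute)
  then show ?thesis
    using assms(1,2) by (simp add: power_mult)
qed

lemma power_two_power_eq_1:
  fixes a :: "'a::comm_monoid_mult"
  assumes "a ^ (2 ^ s * r) = 1" "a ^ (2 ^ k) = 1" "odd r"
  shows "a ^ (2 ^ s) = 1"
proof (cases "k \<le> s")
  case True
  then have "(2::nat) ^ s = 2 ^ k * 2 ^ (s - k)"
    by (simp flip: power_add)
  then show ?thesis
    using assms(2) by (simp add: power_mult)
next
  case False
  then have "(2::nat) ^ k = 2 ^ s * 2 ^ (k - s)"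
    by (simp flip: power_add)
  then have "(a ^ (2 ^ s)) ^ (2 ^ (k - s)) = 1"
    using assms(2) by (simp only: power_mult)
  moreover have "(a ^ (2 ^ s)) ^ r = 1"
    using assms(1) by (simp only: power_mult)
  moreover have "coprime r (2 ^ (k - s))"
    using assms(3) by simp
  ultimately show ?thesis
    by (metis power_eq_1_coprime)
qed

lemma field_power_card_minus_1:
  fixes x :: "'a::{finite,field}"
  assumes "x \<noteq> 0"
  shows "x ^ (card (UNIV :: 'a set) - 1) = 1"
proof -
  define G :: "'a monoid" where "G = \<lparr>carrier = UNIV - {0}, monoid.mult = (*), one = 1\<rparr>"
  interpret G: group G
  proof (rule groupI)
    fix y assume "y \<in> carrier G"
    then show "\<exists>z\<in>carrier G. z \<otimes>\<^bsub>G\<^esub> y = \<one>\<^bsub>G\<^esub>"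
      by (intro bexI[of _ "inverse y"]) (auto simp: G_def)
  qed (auto simp: G_def mult.assoc)
  have "y [^]\<^bsub>G\<^esub> n = y ^ n" for y and n :: nat
    by (induction n) (simp_all add: G_def)
  then show ?thesis
    using G.pow_order_eq_1[of x] assms by (simp add: G_def order_def card_Diff_singleton)
qed

lemma field_power_card_eq_self:
  fixes x :: "'a::{finite,field}"
  shows "x ^ (card (UNIV :: 'a set)) = x"
proof (cases "x = 0")
  case False
  have "card (UNIV :: 'a set) = Suc (card (UNIV :: 'a set) - 1)"
    using finite_UNIV_card_ge_0[where 'a = 'a] by simp
  then have "x ^ (card (UNIV :: 'a set)) = x * x ^ (card (UNIV :: 'a set) - 1)"
    by (metis power_Suc)
  then show ?thesis
    using field_power_card_minus_1[OF False] by simp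
qed (simp add: finite_UNIV_card_ge_0)

lemma field_card_ge_2: "2 \<le> card (UNIV :: 'a::{finite,field} set)"
proof -
  have "card {0, 1 :: 'a} \<le> card (UNIV :: 'a set)"
    by (rule card_mono) simp_all
  then show ?thesis
    by simp
qed

lemma card_roots_of_unity:
  assumes "d dvd card (UNIV :: 'a::{finite,field} set) - 1"
  shows "card {x :: 'a. x ^ d = 1} = d"
proof (rule antisym)
  obtain e where e: "card (UNIV :: 'a set) - 1 = d * e"
    using assms by blast
  then have "0 < d" "0 < e"
    using field_card_ge_2[where 'a = 'a] by (auto intro!: Nat.gr0I)
  from \<open>0 < d\<close> show "card {x :: 'a. x ^ d = 1} \<le> d"
    by (rule card_power_eq_le)
  have "(\<lambda>x. x ^ e) ` (UNIV - {0}) \<subseteq> {x :: 'a. x ^ d = 1}"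
    using field_power_card_minus_1 by (auto simp: mult.commute[of e d] e[symmetric] simp flip: power_mult)
  then have "card ((\<lambda>x. x ^ e) ` (UNIV - {0 :: 'a})) \<le> card {x :: 'a. x ^ d = 1}"
    by (rule card_mono[rotated]) simp
  moreover have "card (UNIV - {0 :: 'a}) \<le> e * card ((\<lambda>x. x ^ e) ` (UNIV - {0 :: 'a}))"
  proof (rule card_le_mult_card_image)
    fix y :: 'a
    have "card {x \<in> UNIV - {0}. x ^ e = y} \<le> card {x. x ^ e = y}"
      by (rule card_mono) auto
    also have "\<dots> \<le> e"
      using \<open>0 < e\<close> by (rule card_power_eq_le)
    finally show "card {x \<in> UNIV - {0}. x ^ e = y} \<le> e" .
  qed simp
  ultimately have "d * e \<le> e * card {x :: 'a. x ^ d = 1}"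
    using e by (simp add: card_Diff_singleton) (meson le_trans mult_le_mono2)
  then show "d \<le> card {x :: 'a. x ^ d = 1}"
    using \<open>0 < e\<close> by (simp add: mult.commute)
qed

lemma roots_of_unity_square:
  assumes "2 * d dvd card (UNIV :: 'a::{finite,field} set) - 1" "y ^ d = (1 :: 'a)"
  shows "\<exists>u. u ^ (2 * d) = 1 \<and> u ^ 2 = y"
proof -
  let ?\<mu> = "\<lambda>k. {x :: 'a. x ^ k = 1}"
  have sq: "(\<lambda>u. u ^ 2) ` ?\<mu> (2 * d) \<subseteq> ?\<mu> d"
    by (auto simp flip: power_mult simp: mult.commute)
  have "card (?\<mu> (2 * d)) \<le> 2 * card ((\<lambda>u. u ^ 2) ` ?\<mu> (2 * d))"
  proof (rule card_le_mult_card_image)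
    fix z :: 'a
    have "card {x \<in> ?\<mu> (2 * d). x ^ 2 = z} \<le> card {x. x ^ 2 = z}"
      by (rule card_mono) auto
    also have "\<dots> \<le> 2"
      by (rule card_power_eq_le) simp
    finally show "card {x \<in> ?\<mu> (2 * d). x ^ 2 = z} \<le> 2" .
  qed simp
  moreover have "card (?\<mu> (2 * d)) = 2 * d" "card (?\<mu> d) = d"
    using assms(1) by (simp_all add: card_roots_of_unity dvd_mult_right)
  ultimately have "card (?\<mu> d) \<le> card ((\<lambda>u. u ^ 2) ` ?\<mu> (2 * d))"
    by simp
  then have "(\<lambda>u. u ^ 2) ` ?\<mu> (2 * d) = ?\<mu> d"
    using sq by (intro card_seteq) simp_all
  then show ?thesis
    using assms(2) by (metis (mono_tags, lifting) imageE mem_Collect_eq)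
qed

section \<open>The map f on the field with q^2 elements\<close>

locale fq2_map =
  fixes q s r :: nat and c :: "'a::{finite,field}" and f :: "'a \<Rightarrow> 'a"
  assumes q_prime_power: "\<exists>p k. prime p \<and> odd p \<and> k \<ge> 1 \<and> q = p ^ k"
    and card_eq: "card (UNIV :: 'a set) = q ^ 2"
    and q_minus_1: "q - 1 = 2 ^ s * r" and odd_r: "odd r"
    and c_in_Fq: "c ^ q = c" and c_nonzero: "c \<noteq> 0"
    and f_eq: "\<And>x. f x = c * (x ^ (q + 1) - x ^ 2)"
begin

lemma odd_q: "odd q"
  using q_prime_power by auto

lemma one_less_q: "1 < q"
proof -
  obtain p k where "prime p" "k \<ge> 1" "q = p ^ k"
    using q_prime_power by blast
  then show ?thesis
    using prime_gt_1_nat[of p] one_less_power[of p k] by simp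
qed

lemma zero_less_s: "0 < s"
  using odd_q odd_r q_minus_1 one_less_q by (cases s) (auto simp: odd_pos)

lemma q_power_of_CHAR: "prime CHAR('a) \<and> (\<exists>k. q = CHAR('a) ^ k)"
proof -
  obtain p k where pk: "prime p" "q = p ^ k"
    using q_prime_power by blast
  have prime_CHAR: "prime CHAR('a)"
    by (intro prime_CHAR_semidom finite_imp_CHAR_pos) simp
  have "CHAR('a) dvd p ^ (k * 2)"
    using CHAR_dvd_CARD[where 'a = 'a] card_eq pk(2) by (simp add: power_mult)
  then have "CHAR('a) = p"
    using prime_CHAR pk(1) by (metis prime_dvd_power primes_dvd_imp_eq)
  with prime_CHAR pk(2) show ?thesis
    by blast
qed

lemma power_q_add: "(x + y) ^ q = x ^ q + (y :: 'a) ^ q"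
  using q_power_of_CHAR freshmans_dream' by blast

lemma power_q_diff: "(x - y) ^ q = x ^ q - (y :: 'a) ^ q"
  using power_q_add[of x "- y"] odd_q by (simp add: power_minus_odd)

lemma power_q_power_q: "((x :: 'a) ^ q) ^ q = x"
  using field_power_card_eq_self[of x] card_eq by (simp add: power2_eq_square power_mult)

lemma neg_neq_self: "(x :: 'a) \<noteq> 0 \<Longrightarrow> - x \<noteq> x"
proof
  assume "x \<noteq> 0" "- x = x"
  then have "of_nat 2 = (0 :: 'a)"
    by (metis mult_2 mult_eq_0_iff of_nat_numeral add_eq_0_iff2)
  then have "CHAR('a) dvd 2"
    by (simp only: of_nat_eq_0_iff_char_dvd)
  then have "CHAR('a) \<le> 2"
    by (rule dvd_imp_le) simp
  moreover have "odd CHAR('a)"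
    using CHAR_dvd_CARD[where 'a = 'a] card_eq odd_q by (auto dest: dvd_trans)
  ultimately show False
    using CHAR_not_1'[where 'a = 'a] by presburger
qed

lemma f_scale: "t ^ q = t \<Longrightarrow> f (t * x) = t ^ 2 * f x"
  by (simp add: f_eq power_mult_distrib power2_eq_square algebra_simps)

lemma f_minus: "f (- x) = f x"
  using f_scale[of "- 1" x] odd_q by simp

lemma funpow_f_scale: "t ^ q = t \<Longrightarrow> (f ^^ n) (t * x) = t ^ (2 ^ n) * (f ^^ n) x"
proof (induction n)
  case (Suc n)
  have "(t ^ (2 ^ n)) ^ q = t ^ (2 ^ n)"
    using Suc.prems by (metis power_mult mult.commute)
  then have "f (t ^ (2 ^ n) * (f ^^ n) x) = (t ^ (2 ^ n)) ^ 2 * f ((f ^^ n) x)"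
    by (rule f_scale)
  then show ?case
    using Suc by (simp add: mult.commute flip: power_mult)
qed simp

lemma funpow_f_0: "(f ^^ n) 0 = 0"
  by (induction n) (simp_all add: f_eq)

text \<open>Since d z = z - z^q satisfies (d z)^q = - d z, the value f z = - c z d z determines z up
  to a factor from F_q.\<close>
lemma scalar_multiple_if_f_eq:
  assumes eq: "f x = t * f y" and t: "t ^ q = t" "t \<noteq> 0" and fy: "f y \<noteq> 0"
  shows "\<exists>u. u ^ q = u \<and> x = u * y"
proof -
  define d where "d z = z - z ^ q" for z :: 'a
  have f_d: "f z = - c * z * d z" for z
    by (simp add: f_eq d_def power_add power2_eq_square algebra_simps)
  have d_q: "d z ^ q = - d z" for z
    by (simp add: d_def power_q_diff power_q_power_q)
  have E1: "x * d x = t * (y * d y)"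
    using eq c_nonzero by (simp add: f_d)
  then have "(x * d x) ^ q = (t * (y * d y)) ^ q"
    by simp
  then have E2: "x ^ q * d x = t * (y ^ q * d y)"
    by (simp add: power_mult_distrib d_q t(1))
  have "d x * d x = (x - x ^ q) * d x"
    by (simp add: d_def)
  also have "\<dots> = t * ((y - y ^ q) * d y)"
    by (simp only: left_diff_distrib right_diff_distrib E1 E2)
  also have "y - y ^ q = d y"
    by (simp add: d_def)
  finally have E3: "d x * d x = t * (d y * d y)" .
  have y: "y \<noteq> 0" "d y \<noteq> 0"
    using fy by (auto simp: f_d)
  have "t * d y * (x * d y) = x * (t * (d y * d y))"
    by (simp only: ac_simps)
  also have "\<dots> = (x * d x) * d x"
    by (simp only: E3 ac_simps)
  also have "\<dots> = t * d y * (y * d x)"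
    by (simp only: E1 ac_simps)
  finally have "x * d y = y * d x"
    using t(2) y(2) by simp
  then have "x = (d x / d y) * y"
    using y(2) by (simp add: field_simps)
  moreover have "(d x / d y) ^ q = d x / d y"
    by (simp add: power_divide d_q)
  ultimately show ?thesis
    by blast
qed

lemma preimages_f:
  assumes "f u = v" "v \<noteq> 0"
  shows "{x. f x = v} = {u, - u}" "u \<noteq> - u"
proof -
  have "x = u \<or> x = - u" if x: "f x = v" for x
  proof -
    obtain t where t: "t ^ q = t" "x = t * u"
      using scalar_multiple_if_f_eq[of x 1 u] x assms by auto
    then have "t ^ 2 = 1"
      using f_scale[of t u] x assms by simp
    then show ?thesis
      using t by (auto simp: power2_eq_1_iff)
  qed
  then show "{x. f x = v} = {u, - u}"
    using assms(1) f_minus by auto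
  have "u \<noteq> 0"
    using assms by (auto simp: f_eq)
  then show "u \<noteq> - u"
    using neg_neq_self by metis
qed

lemma power_q_eq: "(u :: 'a) ^ q = u * u ^ (q - 1)"
  using one_less_q by (simp flip: power_Suc)

lemma in_Fq_if_root_of_unity: "(u :: 'a) ^ (2 ^ s) = 1 \<Longrightarrow> u ^ q = u"
  unfolding power_q_eq q_minus_1 power_mult by simp

lemma square_root_in_Fq:
  assumes "(t :: 'a) ^ (2 ^ (s - 1)) = 1"
  shows "\<exists>u. u ^ q = u \<and> u ^ 2 = t"
proof -
  have "2 * 2 ^ (s - 1) = (2::nat) ^ s"
    using zero_less_s by (simp flip: power_Suc)
  moreover have "q ^ 2 - 1 = (q - 1) * (q + 1)"
    by (cases q) (simp_all add: power2_eq_square)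
  then have "card (UNIV :: 'a set) - 1 = 2 ^ s * (r * (q + 1))"
    unfolding card_eq q_minus_1 by (simp only: mult.assoc)
  ultimately have "2 * 2 ^ (s - 1) dvd card (UNIV :: 'a set) - 1"
    by simp
  then obtain u where "u ^ (2 * 2 ^ (s - 1)) = 1" "u ^ 2 = t"
    using roots_of_unity_square assms by blast
  then show ?thesis
    using in_Fq_if_root_of_unity \<open>2 * 2 ^ (s - 1) = 2 ^ s\<close> by auto
qed

lemma root_of_unity_in_Fq:
  assumes "(t :: 'a) ^ q = t" "t ^ (2 ^ k) = 1"
  shows "t ^ (2 ^ s) = 1"
proof -
  have "t \<noteq> 0"
    using assms(2) by (auto simp: power_0_left)
  then have "t ^ (2 ^ s * r) = 1"
    using assms(1) by (simp add: power_q_eq flip: q_minus_1)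
  then show ?thesis
    using power_two_power_eq_1 assms(2) odd_r by blast
qed

context
  fixes P :: 'a
  assumes P_periodic: "periodic f P" and P_nonzero: "P \<noteq> 0"
begin

lemma nonzero_if_funpow_eq_P: "(f ^^ n) v = P \<Longrightarrow> v \<noteq> 0"
  using P_nonzero funpow_f_0 by auto

text \<open>Each step back from P is lifted along a periodic preimage, and squares the scalar.\<close>
lemma scalar_multiple_of_periodic:
  assumes "(f ^^ k) v = P"
  shows "\<exists>w t. periodic f w \<and> (f ^^ k) w = P \<and> t ^ q = t \<and> t ^ (2 ^ k) = 1 \<and> v = t * w"
  using assms
proof (induction k arbitrary: v)
  case 0
  then show ?case
    using P_periodic by (intro exI[of _ P] exI[of _ 1]) simp
next
  case (Suc k)
  then obtain w' t where w': "periodic f w'" "(f ^^ k) w' = P" "t ^ q = t" "t ^ (2 ^ k) = 1"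
    and fv: "f v = t * w'"
    by (metis funpow_Suc_right comp_apply)
  obtain w where w: "periodic f w" "f w = w'"
    using periodic_has_periodic_preimage[OF w'(1)] by blast
  have "f w \<noteq> 0"
    using nonzero_if_funpow_eq_P w'(2) w(2) by blast
  moreover have "t \<noteq> 0"
    using w'(4) by (auto simp: power_0_left)
  ultimately obtain u where u: "u ^ q = u" "v = u * w"
    using scalar_multiple_if_f_eq[of v t w] fv w(2) w'(3) by auto
  then have "u ^ 2 * f w = t * f w"
    using f_scale fv w(2) by simp
  then have "u ^ 2 = t"
    using \<open>f w \<noteq> 0\<close> by simp
  then have "u ^ (2 ^ Suc k) = 1"
    using w'(4) by (simp add: power_mult)
  with u w w' show ?case
    by (metis funpow_Suc_right comp_apply)
qed

lemma tree_level_Suc_s_empty: "tree_level f P (Suc s) = {}"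
proof (rule ccontr)
  assume "tree_level f P (Suc s) \<noteq> {}"
  then obtain v where v: "v \<in> tree_level f P (Suc s)"
    by blast
  then have "(f ^^ Suc s) v = P"
    by (simp add: tree_level_def)
  then obtain w t where wt: "periodic f w" "t ^ q = t" "t ^ (2 ^ Suc s) = 1" "v = t * w"
    using scalar_multiple_of_periodic by blast
  then have "t ^ (2 ^ s) = 1"
    using root_of_unity_in_Fq by blast
  then have "(f ^^ s) v = (f ^^ s) w"
    using funpow_f_scale wt(2,4) by simp
  then have "periodic f ((f ^^ s) v)"
    using periodic_funpow[OF wt(1)] by simp
  with v show False
    by (simp add: tree_level_def)
qed

lemma card_children_P: "card (children f P) = 1"
proof -
  obtain w where w: "periodic f w" "f w = P"
    using periodic_has_periodic_preimage[OF P_periodic] by blast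
  have "\<not> periodic f (- w)"
    using periodic_inj[OF _ w(1), of "- w"] f_minus preimages_f(2)[OF w(2) P_nonzero] by auto
  then have "children f P = {- w}"
    using preimages_f(1)[OF w(2) P_nonzero] w(1) by (auto simp: children_def)
  then show ?thesis
    by simp
qed

lemma card_children_tree_level:
  assumes "0 < n" "n < s" "v \<in> tree_level f P n"
  shows "card (children f v) = 2"
proof -
  have "(f ^^ n) v = P"
    using assms(3) by (simp add: tree_level_def)
  then obtain w t where wt: "periodic f w" "t ^ q = t" "t ^ (2 ^ n) = 1" "v = t * w"
    using scalar_multiple_of_periodic by blast
  have "(2::nat) ^ (s - 1) = 2 ^ n * 2 ^ (s - 1 - n)"
    using assms(2) by (simp flip: power_add)
  then have "t ^ (2 ^ (s - 1)) = 1"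
    using wt(3) by (simp add: power_mult)
  then obtain u where u: "u ^ q = u" "u ^ 2 = t"
    using square_root_in_Fq by blast
  obtain w' where "f w' = w"
    using periodic_has_periodic_preimage[OF wt(1)] by blast
  then have fu: "f (u * w') = v"
    using f_scale[OF u(1)] u(2) wt(4) by simp
  have "\<not> periodic f v"
    using assms(1,3) by (cases n) (simp_all add: tree_level_Suc)
  then have "children f v = {x. f x = v}"
    using periodic_funpow[of f _ 1] by (auto simp: children_def)
  also have "\<dots> = {u * w', - (u * w')}"
    using preimages_f(1)[OF fu] nonzero_if_funpow_eq_P assms(3) by (auto simp: tree_level_def)
  finally show ?thesis
    using preimages_f(2)[OF fu] nonzero_if_funpow_eq_P assms(3) by (auto simp: tree_level_def)
qed

end

end

theorem theorem12:
  fixes q s r :: nat and c :: "'a :: {finite, field}" and f :: "'a \<Rightarrow> 'a" and P :: 'a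
  assumes q_pow: "\<exists>p k. prime p \<and> odd p \<and> k \<ge> 1 \<and> q = p ^ k"
    and card: "card (UNIV :: 'a set) = q ^ 2"
    and sr: "q - 1 = 2 ^ s * r" and r_odd: "odd r"
    and c_Fq: "c ^ q = c" and c_nz: "c \<noteq> 0"
    and f_def: "\<And>x. f x = c * (x ^ (q + 1) - x ^ 2)"
    and P_per: "periodic f P"
    and P_comp: "\<not> same_component f P 0"
  shows "iso_to_T f (tree_at f P) P s"
proof -
  interpret fq2_map q s r c f
    using q_pow card sr r_odd c_Fq c_nz f_def by unfold_locales
  have "P \<noteq> 0"
    using P_comp unfolding same_component_def by (metis funpow_0)
  with P_per show ?thesis
    using card_children_P card_children_tree_level tree_level_Suc_s_empty
    by (intro iso_to_T_if_card_children) auto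
qed

end
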